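(* Let $n\ge1$, $s\in(0,1)$ with $n/s\ge2$, $\Omega\subset\mathbb R^n$ a bounded Lipschitz domain, $\mu\in(0,n)$, $M$ satisfying (M1)–(M3) and $g$ satisfying (g1)–(g4). Then any nontrivial weak solution $u\in X_0\setminus\{0\}$ of $$-M(\|u\|^{n/s})(-\Delta)^s_{n/s}u=\left(\int_\Omega\frac{G(y,u)}{|x-y|^\mu}dy\right)g(x,u)\ \text{in }\Omega,\quad u=0\ \text{in }\mathbb R^n\setminus\Omega$$ is nonnegative, i.e. $u\ge0$ a.e. in $\Omega$.
   Context: $X_0=\{u\in W^{s,n/s}(\mathbb R^n): u=0 \text{ in } \mathbb R^n\setminus\Omega\}$ with norm $\|u\|=\left(\int_{\mathbb R^n}\int_{\mathbb R^n}\frac{|u(x)-u(y)|^{n/s}}{|x-y|^{2n}}dxdy\right)^{s/n}$. A weak solution is $u\in X_0$ with $M(\|u\|^{n/s})\int_{\mathbb R^{2n}}\frac{|u(x)-u(y)|^{\frac ns-2}(u(x)-u(y))(\phi(x)-\phi(y))}{|x-y|^{2n}}dxdy=\int_\Omega\left(\int_\Omega\frac{G(y,u)}{|x-y|^\mu}dy\right)g(x,u)\phi\,dx$ for all $\phi\in X_0$. $M:\mathbb R^+\to\mathbb R^+$ continuous, $\hat M(t)=\int_0^tM$; $g(x,t)=h(x,t)\exp(|t|^{\frac n{n-s}})$ continuous, $G(x,t)=\int_0^tg(x,\tau)d\tau$. (M1) $\hat M(t+s)\ge\hat M(t)+\hat M(s)$. (M2) There is $\gamma>1$ with $M(t)/t^{\gamma-1}$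 nonincreasing for $t>0$. (M3) For each $b>0$ there is $\kappa(b)>0$ with $M(t)\ge\kappa$ for $t\ge b$. (g1) $h\in C^1(\overline\Omega\times\mathbb R)$, $h=0$ for $t\le0$, $h>0$ for $t>0$. (g2) For every $\varepsilon>0$, $\lim_{t\to\infty}\sup_xh(x,t)e^{-\varepsilon|t|^{\frac n{n-s}}}=0$, $\lim_{t\to\infty}\inf_xh(x,t)e^{\varepsilon|t|^{\frac n{n-s}}}=\infty$. (g3) There are positive $t_0,T_0,\gamma_0$ with $0<t^{\gamma_0}G(x,t)\le T_0g(x,t)$ on $\Omega\times[t_0,\infty)$. (g4) There is $l>\frac{\gamma n}{2s}-1$ with $g(x,t)/t^l$ increasing in $t>0$ uniformly in $x$. *)

theory Defs
  imports "HOL-Analysis.Analysis"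
begin

abbreviation dimR :: "'a::euclidean_space itself \<Rightarrow> real" where
  "dimR _ \<equiv> real DIM('a)"

definition frac_sobolev :: "real \<Rightarrow> real \<Rightarrow> ('a::euclidean_space \<Rightarrow> real) set" where
  "frac_sobolev s p = {u. u \<in> borel_measurable lebesgue \<and>
     (\<integral>\<^sup>+ x. ennreal (\<bar>u x\<bar> powr p) \<partial>lebesgue) < \<infinity> \<and>
     (\<integral>\<^sup>+ x. \<integral>\<^sup>+ y. ennreal (\<bar>u x - u y\<bar> powr p / norm (x - y) powr (real DIM('a) + s * p))
         \<partial>lebesgue \<partial>lebesgue) < \<infinity>}"

definition X0 :: "real \<Rightarrow> 'a::euclidean_space set \<Rightarrow> ('a \<Rightarrow> real) set" where
  "X0 s \<Omega> = {u \<in> frac_sobolev s (real DIM('a) / s). AE x in lebesgue. x \<notin> \<Omega> \<longrightarrow> u x = 0}"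

definition X0_norm :: "real \<Rightarrow> ('a::euclidean_space \<Rightarrow> real) \<Rightarrow> real" where
  "X0_norm s u = (enn2real (\<integral>\<^sup>+ x. \<integral>\<^sup>+ y.
       ennreal (\<bar>u x - u y\<bar> powr (real DIM('a) / s) / norm (x - y) powr (2 * real DIM('a)))
       \<partial>lebesgue \<partial>lebesgue)) powr (s / real DIM('a))"

definition weak_solution ::
  "real \<Rightarrow> real \<Rightarrow> (real \<Rightarrow> real) \<Rightarrow> ('a::euclidean_space \<Rightarrow> real \<Rightarrow> real) \<Rightarrow>
   ('a \<Rightarrow> real \<Rightarrow> real) \<Rightarrow> 'a set \<Rightarrow> ('a \<Rightarrow> real) \<Rightarrow> bool" where
  "weak_solution s \<mu> M g G \<Omega> u \<longleftrightarrow> u \<in> X0 s \<Omega> \<and>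
     (\<forall>\<phi>\<in>X0 s \<Omega>.
        M ((X0_norm s u) powr (real DIM('a) / s)) *
          (\<integral> z. (case z of (x, y) \<Rightarrow>
               \<bar>u x - u y\<bar> powr (real DIM('a) / s - 2) * (u x - u y) * (\<phi> x - \<phi> y)
                 / norm (x - y) powr (2 * real DIM('a))) \<partial>(lebesgue \<Otimes>\<^sub>M lebesgue))
        = (\<integral> x \<in> \<Omega>. (\<integral> y \<in> \<Omega>. G y (u y) / norm (x - y) powr \<mu> \<partial>lebesgue) * g x (u x) * \<phi> x
             \<partial>lebesgue))"

text \<open>Bounded Lipschitz domain: open, connected, nonempty, and near every boundary point
  the set is (after choosing a unit direction e) the subgraph of a Lipschitz function
  of the variables orthogonal to e.\<close>
definition lipschitz_domain :: "'a::euclidean_space set \<Rightarrow> bool" where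
  "lipschitz_domain \<Omega> \<longleftrightarrow> open \<Omega> \<and> connected \<Omega> \<and> \<Omega> \<noteq> {} \<and>
     (\<forall>x\<in>frontier \<Omega>. \<exists>r>0. \<exists>e. norm e = 1 \<and>
        (\<exists>\<phi> L. (\<forall>y z. \<bar>\<phi> y - \<phi> z\<bar> \<le> L * norm (y - z)) \<and>
               (\<forall>y. \<phi> y = \<phi> (y - (y \<bullet> e) *\<^sub>R e)) \<and>
               \<Omega> \<inter> ball x r = {y \<in> ball x r. y \<bullet> e < \<phi> y}))"

definition C1_on :: "('b::real_normed_vector \<Rightarrow> real) \<Rightarrow> 'b set \<Rightarrow> bool" where
  "C1_on f S \<longleftrightarrow> (\<exists>D :: 'b \<Rightarrow> ('b \<Rightarrow>\<^sub>L real). continuous_on S D \<and>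
      (\<forall>z\<in>S. (f has_derivative blinfun_apply (D z)) (at z within S)))"

end

(*
  Test the equation with the negative part phi = min u 0, which lies in X0 because
  t \<mapsto> min t 0 is 1-Lipschitz. The Choquard term vanishes: h(x, t) = 0 for t \<le> 0 and
  phi = 0 where u > 0. Since u is nontrivial and vanishes outside the bounded set Omega,
  its Gagliardo seminorm is positive, so (M3) makes the Kirchhoff factor positive and the
  double integral of |u x - u y|^(n/s-2) (u x - u y) (phi x - phi y) / |x - y|^(2n) is 0.
  Monotonicity of t \<mapsto> min t 0 makes this integrand nonnegative, and positive wherever
  phi x \<noteq> phi y; hence phi is a.e. constant, and so a.e. 0 because it vanishes outside
  Omega.
*)

theory Submission
  imports Defs
begin

lemma sigma_finite_lebesgue: "sigma_finite_measure (lebesgue :: 'a::euclidean_space measure)"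
  unfolding sigma_finite_measure_def
proof (intro exI conjI)
  let ?A = "range (\<lambda>n::nat. cball (0::'a) (real n))"
  show "countable ?A" "?A \<subseteq> sets lebesgue" by auto
  show "\<Union> ?A = space lebesgue" by (auto simp: real_arch_simple)
  show "\<forall>a\<in>?A. emeasure lebesgue a \<noteq> \<infinity>"
    using emeasure_lborel_cball_finite by (auto simp: less_top)
qed

interpretation lebesgue: sigma_finite_measure "lebesgue :: 'a::euclidean_space measure"
  by (rule sigma_finite_lebesgue)

interpretation lebesgue_pair: pair_sigma_finite "lebesgue :: 'a::euclidean_space measure" lebesgue ..

lemma borel_measurable_id_lebesgue [measurable]:
  "(\<lambda>x. x) \<in> borel_measurable (lebesgue :: 'a::euclidean_space measure)"
  by (rule measurable_completion) simp

lemma abs_min_zero_diff_le: "\<bar>min a 0 - min b 0\<bar> \<le> \<bar>a - b\<bar>" for a b :: real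
  by (simp add: min_def)

lemma diff_mult_min_zero_diff_nonneg: "0 \<le> (a - b) * (min a 0 - min b 0)" for a b :: real
  by (auto simp: min_def mult_nonpos_nonpos mult_nonneg_nonpos)

lemma diff_mult_min_zero_diff_pos:
  fixes a b :: real
  assumes "min a 0 \<noteq> min b 0"
  shows "0 < (a - b) * (min a 0 - min b 0)"
  using assms by (cases "a < b") (auto simp: min_def mult_neg_neg mult_pos_neg split: if_splits)

lemma abs_powr_mult_le_powr_add2:
  fixes a c q :: real
  assumes "\<bar>c\<bar> \<le> \<bar>a\<bar>"
  shows "\<bar>\<bar>a\<bar> powr q * a * c\<bar> \<le> \<bar>a\<bar> powr (q + 2)"
proof (cases "a = 0")
  case False
  have "\<bar>\<bar>a\<bar> powr q * a * c\<bar> = \<bar>a\<bar> powr q * \<bar>a\<bar> * \<bar>c\<bar>" by (simp add: abs_mult)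
  also have "\<dots> \<le> \<bar>a\<bar> powr q * \<bar>a\<bar> * \<bar>a\<bar>" using assms by (simp add: mult_left_mono)
  also have "\<dots> = \<bar>a\<bar> powr (q + 2)" using False by (simp add: powr_add powr_numeral power2_eq_square)
  finally show ?thesis .
qed (simp)

lemma AE_lebesgue_neq: "AE y in lebesgue. y \<noteq> (x::'a::euclidean_space)"
proof -
  have "AE y in lborel. y \<notin> {x}"
    by (rule AE_not_in[OF countable_imp_null_set_lborel]) simp
  then show ?thesis by (intro AE_completion) simp
qed

lemma AE_lebesgue_ex_outside_bounded:
  fixes B :: "'a::euclidean_space set"
  assumes "AE x in lebesgue. P x" and "bounded B"
  shows "\<exists>x. x \<notin> B \<and> P x"
proof (rule ccontr)
  assume none: "\<nexists>x. x \<notin> B \<and> P x"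
  obtain r where r: "B \<subseteq> cball 0 r" using \<open>bounded B\<close> by (auto simp: bounded_iff subset_iff)
  have "AE x in lebesgue. x \<in> cball (0::'a) r \<longleftrightarrow> x \<in> UNIV"
    using assms(1) by eventually_elim (use none r in auto)
  then have "emeasure lebesgue (cball (0::'a) r) = emeasure lebesgue (UNIV :: 'a set)"
    by (rule emeasure_eq_AE) auto
  then show False using emeasure_lborel_cball_finite[of "0::'a" r] by simp
qed

lemma AE_eq_0_if_AE_const:
  fixes f :: "'a::euclidean_space \<Rightarrow> real"
  assumes "AE x in lebesgue. AE y in lebesgue. f x = f y"
    and "AE x in lebesgue. x \<notin> \<Omega> \<longrightarrow> f x = 0" and "bounded \<Omega>"
  shows "AE x in lebesgue. f x = 0"
proof -
  have "AE x in lebesgue. (AE y in lebesgue. f x = f y) \<and> (x \<notin> \<Omega> \<longrightarrow> f x = 0)"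
    using assms(1,2) by eventually_elim simp
  then obtain x where "AE y in lebesgue. f x = f y" and "f x = 0"
    using AE_lebesgue_ex_outside_bounded[OF _ \<open>bounded \<Omega>\<close>] by blast
  then show ?thesis by (auto elim: eventually_mono)
qed

lemma AE_const_if_gagliardo_eq_0:
  fixes u :: "'a::euclidean_space \<Rightarrow> real"
  assumes [measurable]: "u \<in> borel_measurable lebesgue"
    and "(\<integral>\<^sup>+ x. \<integral>\<^sup>+ y. ennreal (\<bar>u x - u y\<bar> powr p / norm (x - y) powr c) \<partial>lebesgue \<partial>lebesgue) = 0"
  shows "AE x in lebesgue. AE y in lebesgue. u x = u y"
proof -
  have "AE x in lebesgue. (\<integral>\<^sup>+ y. ennreal (\<bar>u x - u y\<bar> powr p / norm (x - y) powr c) \<partial>lebesgue) = 0"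
    using assms(2) by (subst (asm) nn_integral_0_iff_AE) auto
  then show ?thesis
  proof eventually_elim
    case (elim x)
    then have "AE y in lebesgue. ennreal (\<bar>u x - u y\<bar> powr p / norm (x - y) powr c) = 0"
      by (subst (asm) nn_integral_0_iff_AE) auto
    then show ?case
      using AE_lebesgue_neq[of x] by eventually_elim (auto simp: ennreal_eq_0_iff divide_le_0_iff)
  qed
qed

lemma frac_sobolevD:
  fixes u :: "'a::euclidean_space \<Rightarrow> real"
  assumes "u \<in> frac_sobolev s p"
  shows "u \<in> borel_measurable lebesgue"
    and "(\<integral>\<^sup>+ x. ennreal (\<bar>u x\<bar> powr p) \<partial>lebesgue) < \<infinity>"
    and "(\<integral>\<^sup>+ x. \<integral>\<^sup>+ y. ennreal (\<bar>u x - u y\<bar> powr p / norm (x - y) powr (real DIM('a) + s * p))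
           \<partial>lebesgue \<partial>lebesgue) < \<infinity>"
  using assms unfolding frac_sobolev_def by auto

lemma X0D:
  fixes u :: "'a::euclidean_space \<Rightarrow> real"
  assumes "u \<in> X0 s \<Omega>" and "s \<noteq> 0"
  shows "u \<in> borel_measurable lebesgue"
    and "(\<integral>\<^sup>+ x. \<integral>\<^sup>+ y. ennreal (\<bar>u x - u y\<bar> powr (real DIM('a) / s) / norm (x - y) powr (2 * real DIM('a)))
           \<partial>lebesgue \<partial>lebesgue) < \<infinity>"
    and "AE x in lebesgue. x \<notin> \<Omega> \<longrightarrow> u x = 0"
proof -
  have u: "u \<in> frac_sobolev s (real DIM('a) / s)" and "AE x in lebesgue. x \<notin> \<Omega> \<longrightarrow> u x = 0"
    using assms(1) unfolding X0_def by auto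
  then show "u \<in> borel_measurable lebesgue" and "AE x in lebesgue. x \<notin> \<Omega> \<longrightarrow> u x = 0"
    using frac_sobolevD(1) by auto
  have "real DIM('a) + s * (real DIM('a) / s) = 2 * real DIM('a)" using \<open>s \<noteq> 0\<close> by simp
  then show "(\<integral>\<^sup>+ x. \<integral>\<^sup>+ y. ennreal (\<bar>u x - u y\<bar> powr (real DIM('a) / s) / norm (x - y) powr (2 * real DIM('a)))
           \<partial>lebesgue \<partial>lebesgue) < \<infinity>"
    using frac_sobolevD(3)[OF u] by simp
qed

lemma min_zero_in_frac_sobolev:
  fixes u :: "'a::euclidean_space \<Rightarrow> real"
  assumes "u \<in> frac_sobolev s p" and "0 \<le> p"
  shows "(\<lambda>x. min (u x) 0) \<in> frac_sobolev s p"
proof -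
  note u = frac_sobolevD[OF assms(1)]
  have "(\<integral>\<^sup>+ x. ennreal (\<bar>min (u x) 0\<bar> powr p) \<partial>lebesgue) \<le> (\<integral>\<^sup>+ x. ennreal (\<bar>u x\<bar> powr p) \<partial>lebesgue)"
    using assms(2) by (intro nn_integral_mono ennreal_leI powr_mono2) auto
  moreover have "(\<integral>\<^sup>+ x. \<integral>\<^sup>+ y. ennreal (\<bar>min (u x) 0 - min (u y) 0\<bar> powr p
        / norm (x - y) powr (real DIM('a) + s * p)) \<partial>lebesgue \<partial>lebesgue)
    \<le> (\<integral>\<^sup>+ x. \<integral>\<^sup>+ y. ennreal (\<bar>u x - u y\<bar> powr p
        / norm (x - y) powr (real DIM('a) + s * p)) \<partial>lebesgue \<partial>lebesgue)"
    using assms(2)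
    by (intro nn_integral_mono ennreal_leI divide_right_mono powr_mono2 abs_min_zero_diff_le) auto
  ultimately show ?thesis
    using u unfolding frac_sobolev_def by (auto intro: le_less_trans)
qed

lemma min_zero_in_X0:
  assumes "u \<in> X0 s \<Omega>" and "0 \<le> s"
  shows "(\<lambda>x. min (u x) 0) \<in> X0 s \<Omega>"
  using assms unfolding X0_def by (auto intro!: min_zero_in_frac_sobolev elim: eventually_mono)

lemma X0_norm_pos:
  fixes u :: "'a::euclidean_space \<Rightarrow> real"
  assumes u: "u \<in> X0 s \<Omega>" and "0 < s" "bounded \<Omega>" and "\<not> (AE x in lebesgue. u x = 0)"
  shows "0 < X0_norm s u"
proof -
  define Q where "Q = (\<integral>\<^sup>+ x. \<integral>\<^sup>+ y. ennreal (\<bar>u x - u y\<bar> powr (real DIM('a) / s)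
      / norm (x - y) powr (2 * real DIM('a))) \<partial>lebesgue \<partial>lebesgue)"
  have "Q < \<infinity>" unfolding Q_def using X0D(2)[OF u] \<open>0 < s\<close> by simp
  moreover have "Q \<noteq> 0"
  proof
    assume "Q = 0"
    then have "AE x in lebesgue. AE y in lebesgue. u x = u y"
      unfolding Q_def using X0D(1)[OF u] \<open>0 < s\<close> by (intro AE_const_if_gagliardo_eq_0) auto
    then show False
      using AE_eq_0_if_AE_const X0D(3)[OF u] assms(2-4) by auto
  qed
  ultimately have "0 < enn2real Q"
    by (simp add: enn2real_positive_iff zero_less_iff_neq_zero)
  then show ?thesis unfolding X0_norm_def Q_def[symmetric] by simp
qed

definition frac_laplacian_form :: "real \<Rightarrow> ('a::euclidean_space \<Rightarrow> real) \<Rightarrow> ('a \<Rightarrow> real) \<Rightarrow> real" where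
  "frac_laplacian_form s u \<phi> = (\<integral> z. (case z of (x, y) \<Rightarrow>
       \<bar>u x - u y\<bar> powr (real DIM('a) / s - 2) * (u x - u y) * (\<phi> x - \<phi> y)
         / norm (x - y) powr (2 * real DIM('a))) \<partial>(lebesgue \<Otimes>\<^sub>M lebesgue))"

lemma weak_solution_testD:
  fixes u :: "'a::euclidean_space \<Rightarrow> real"
  assumes "weak_solution s \<mu> M g G \<Omega> u" and "\<phi> \<in> X0 s \<Omega>"
  shows "M (X0_norm s u powr (real DIM('a) / s)) * frac_laplacian_form s u \<phi>
    = (\<integral> x \<in> \<Omega>. (\<integral> y \<in> \<Omega>. G y (u y) / norm (x - y) powr \<mu> \<partial>lebesgue) * g x (u x) * \<phi> x \<partial>lebesgue)"
  using assms unfolding weak_solution_def frac_laplacian_form_def by blast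

lemma integrable_frac_laplacian_integrand:
  fixes u \<phi> :: "'a::euclidean_space \<Rightarrow> real"
  assumes u: "u \<in> X0 s \<Omega>" "s \<noteq> 0" and [measurable]: "\<phi> \<in> borel_measurable lebesgue"
    and contraction: "\<And>x y. \<bar>\<phi> x - \<phi> y\<bar> \<le> \<bar>u x - u y\<bar>"
  shows "integrable (lebesgue \<Otimes>\<^sub>M lebesgue) (\<lambda>(x, y).
    \<bar>u x - u y\<bar> powr (real DIM('a) / s - 2) * (u x - u y) * (\<phi> x - \<phi> y) / norm (x - y) powr (2 * real DIM('a)))"
    (is "integrable _ ?F")
proof (rule integrableI_bounded)
  note [measurable] = X0D(1)[OF u]
  define K where "K x y = \<bar>u x - u y\<bar> powr (real DIM('a) / s) / norm (x - y) powr (2 * real DIM('a))" for x y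
  have [measurable]: "(\<lambda>(x, y). K x y) \<in> borel_measurable (lebesgue \<Otimes>\<^sub>M lebesgue)"
    unfolding K_def by measurable
  show "?F \<in> borel_measurable (lebesgue \<Otimes>\<^sub>M lebesgue)" by measurable
  have "norm (?F (x, y)) \<le> K x y" for x y
  proof -
    have "\<bar>\<bar>u x - u y\<bar> powr (real DIM('a) / s - 2) * (u x - u y) * (\<phi> x - \<phi> y)\<bar>
        \<le> \<bar>u x - u y\<bar> powr (real DIM('a) / s)"
      using abs_powr_mult_le_powr_add2[OF contraction, of x y "real DIM('a) / s - 2"] by simp
    then show ?thesis unfolding K_def by (simp add: divide_right_mono)
  qed
  then have "(\<integral>\<^sup>+ z. ennreal (norm (?F z)) \<partial>(lebesgue \<Otimes>\<^sub>M lebesgue))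
      \<le> (\<integral>\<^sup>+ z. ennreal (case z of (x, y) \<Rightarrow> K x y) \<partial>(lebesgue \<Otimes>\<^sub>M lebesgue))"
    by (intro nn_integral_mono ennreal_leI) auto
  also have "\<dots> = (\<integral>\<^sup>+ x. \<integral>\<^sup>+ y. ennreal (K x y) \<partial>lebesgue \<partial>lebesgue)"
    by (subst lebesgue.nn_integral_fst[symmetric]) auto
  also have "\<dots> < \<infinity>" unfolding K_def using X0D(2)[OF u] .
  finally show "(\<integral>\<^sup>+ z. ennreal (norm (?F z)) \<partial>(lebesgue \<Otimes>\<^sub>M lebesgue)) < \<infinity>" .
qed

lemma AE_nonneg_if_frac_laplacian_form_min_zero_eq_0:
  fixes u :: "'a::euclidean_space \<Rightarrow> real"
  assumes u: "u \<in> X0 s \<Omega>" "0 < s" "bounded \<Omega>"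
    and form: "frac_laplacian_form s u (\<lambda>x. min (u x) 0) = 0"
  shows "AE x in lebesgue. 0 \<le> u x"
proof -
  define \<phi> where "\<phi> x = min (u x) 0" for x
  let ?F = "\<lambda>(x, y). \<bar>u x - u y\<bar> powr (real DIM('a) / s - 2) * (u x - u y) * (\<phi> x - \<phi> y)
      / norm (x - y) powr (2 * real DIM('a))"
  have [measurable]: "u \<in> borel_measurable lebesgue" using X0D(1) u by auto
  have "integrable (lebesgue \<Otimes>\<^sub>M lebesgue) ?F"
    using u abs_min_zero_diff_le unfolding \<phi>_def
    by (intro integrable_frac_laplacian_integrand) auto
  moreover have "0 \<le> ?F z" for z
    using diff_mult_min_zero_diff_nonneg by (auto simp: \<phi>_def mult.assoc split: prod.split)
  moreover have "integral\<^sup>L (lebesgue \<Otimes>\<^sub>M lebesgue) ?F = 0"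
    using form unfolding frac_laplacian_form_def \<phi>_def by (simp add: case_prod_beta')
  ultimately have "AE z in lebesgue \<Otimes>\<^sub>M lebesgue. ?F z = 0"
    by (simp add: integral_nonneg_eq_0_iff_AE)
  moreover have F_pos: "0 < ?F (x, y)" if "\<phi> x \<noteq> \<phi> y" for x y
  proof -
    have "0 < (u x - u y) * (\<phi> x - \<phi> y)"
      using diff_mult_min_zero_diff_pos that unfolding \<phi>_def by blast
    moreover have "x \<noteq> y" and "u x \<noteq> u y" using that calculation by auto
    ultimately show ?thesis by (simp add: mult.assoc)
  qed
  ultimately have "AE z in lebesgue \<Otimes>\<^sub>M lebesgue. \<phi> (fst z) = \<phi> (snd z)"
    by (elim eventually_mono) (use F_pos in force)
  then have "AE x in lebesgue. AE y in lebesgue. \<phi> x = \<phi> y"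
    using lebesgue_pair.AE_pair by fastforce
  moreover have "AE x in lebesgue. x \<notin> \<Omega> \<longrightarrow> \<phi> x = 0"
    using X0D(3)[OF u(1)] u(2) by (auto simp: \<phi>_def elim: eventually_mono)
  ultimately have "AE x in lebesgue. \<phi> x = 0"
    using AE_eq_0_if_AE_const u(3) by blast
  then show ?thesis by (auto simp: \<phi>_def elim: eventually_mono)
qed

theorem lemma3p9:
  fixes \<Omega> :: "'a::euclidean_space set" and s \<mu> \<gamma> :: real
    and M :: "real \<Rightarrow> real" and h :: "'a \<Rightarrow> real \<Rightarrow> real" and u :: "'a \<Rightarrow> real"
  defines "n \<equiv> real DIM('a)"
  defines "g \<equiv> (\<lambda>x t. h x t * exp (\<bar>t\<bar> powr (n / (n - s))))"
  defines "G \<equiv> (\<lambda>x t. LBINT \<tau>=0..t. g x \<tau>)"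
  defines "Mhat \<equiv> (\<lambda>t. integral {0..t} M)"
  assumes s: "0 < s" "s < 1" "n / s \<ge> 2"
    and dom: "bounded \<Omega>" "lipschitz_domain \<Omega>"
    and mu: "0 < \<mu>" "\<mu> < n"
    and M_cont: "continuous_on {0..} M" and M_nonneg: "\<forall>t\<ge>0. M t \<ge> 0"
    and M1: "\<forall>t\<ge>0. \<forall>r\<ge>0. Mhat (t + r) \<ge> Mhat t + Mhat r"
    and M2: "\<gamma> > 1" "\<forall>t1 t2. 0 < t1 \<longrightarrow> t1 \<le> t2 \<longrightarrow>
               M t2 / t2 powr (\<gamma> - 1) \<le> M t1 / t1 powr (\<gamma> - 1)"
    and M3: "\<forall>b>0. \<exists>\<kappa>>0. \<forall>t\<ge>b. \<kappa> \<le> M t"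
    and g_cont: "continuous_on (closure \<Omega> \<times> UNIV) (\<lambda>(x, t). g x t)"
    and g1: "C1_on (\<lambda>(x, t). h x t) (closure \<Omega> \<times> UNIV)"
            "\<forall>x\<in>closure \<Omega>. \<forall>t\<le>0. h x t = 0"
            "\<forall>x\<in>closure \<Omega>. \<forall>t>0. h x t > 0"
    and g2: "\<forall>\<epsilon>>0. ((\<lambda>t. SUP x\<in>closure \<Omega>. h x t * exp (- \<epsilon> * \<bar>t\<bar> powr (n / (n - s))))
                        \<longlongrightarrow> 0) at_top"
            "\<forall>\<epsilon>>0. filterlim (\<lambda>t. INF x\<in>closure \<Omega>. h x t * exp (\<epsilon> * \<bar>t\<bar> powr (n / (n - s))))
                        at_top at_top"
    and g3: "\<exists>t0>0. \<exists>T0>0. \<exists>\<gamma>0>0. \<forall>x\<in>\<Omega>. \<forall>t\<ge>t0.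
               0 < t powr \<gamma>0 * G x t \<and> t powr \<gamma>0 * G x t \<le> T0 * g x t"
    and g4: "\<exists>l. l > \<gamma> * n / (2 * s) - 1 \<and>
               (\<forall>x\<in>closure \<Omega>. strict_mono_on {0<..} (\<lambda>t. g x t / t powr l))"
    and sol: "weak_solution s \<mu> M g G \<Omega> u"
    and nontrivial: "\<not> (AE x in lebesgue. u x = 0)"
  shows "AE x in lebesgue. x \<in> \<Omega> \<longrightarrow> 0 \<le> u x"
proof -
  have u: "u \<in> X0 s \<Omega>" using sol unfolding weak_solution_def by blast
  define \<phi> where "\<phi> x = min (u x) 0" for x
  have "0 < X0_norm s u powr (n / s)"
    using X0_norm_pos[OF u s(1) dom(1) nontrivial] by simp
  then obtain \<kappa> where "0 < \<kappa>" "\<forall>t \<ge> X0_norm s u powr (n / s). \<kappa> \<le> M t"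
    using M3 by blast
  then have M_pos: "0 < M (X0_norm s u powr (n / s))" by force
  have "g x (u x) * \<phi> x = 0" if "x \<in> \<Omega>" for x
    using g1(2) closure_subset that by (cases "u x \<le> 0") (auto simp: g_def \<phi>_def)
  then have "(\<lambda>x. indicator \<Omega> x *\<^sub>R
      ((\<integral> y \<in> \<Omega>. G y (u y) / norm (x - y) powr \<mu> \<partial>lebesgue) * g x (u x) * \<phi> x)) = (\<lambda>x. 0)"
    by (auto simp: indicator_def mult.assoc)
  then have "(\<integral> x \<in> \<Omega>. (\<integral> y \<in> \<Omega>. G y (u y) / norm (x - y) powr \<mu> \<partial>lebesgue) * g x (u x) * \<phi> x
      \<partial>lebesgue) = 0"
    by (simp add: set_lebesgue_integral_def)
  then have "frac_laplacian_form s u \<phi> = 0"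
    using weak_solution_testD[OF sol min_zero_in_X0[OF u]] s(1) M_pos
    unfolding n_def \<phi>_def by simp
  then have "AE x in lebesgue. 0 \<le> u x"
    using AE_nonneg_if_frac_laplacian_form_min_zero_eq_0[OF u s(1) dom(1)] unfolding \<phi>_def by blast
  then show ?thesis by (auto elim: eventually_mono)
qed

end
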